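(* Let $K$ be a field of characteristic $0$, let $L=\mathcal{L}(x,y)$ be the free Lie algebra over $K$ freely generated by $x,y$, let $\delta$ be the derivation of $L$ with $\delta(x)=0$, $\delta(y)=x$, and $L^\delta=\ker\delta$. If $f\in L^\delta$ is a nonzero element of degree at most $5$, then $f$ belongs to the Lie subalgebra of $L$ generated by $x$ and $[y,x]$. *)

theory Defs
  imports Main "HOL-Library.Function_Algebras"
begin

text \<open>Free associative algebra K<x,y> on two letters: noncommutative polynomials are
  functions from words to coefficients (finite support is automatic for all elements we use).
  The free Lie algebra L(x,y) is realised, as usual, as the Lie subalgebra of K<x,y>
  (with bracket [a,b] = ab - ba) generated by x and y.\<close>

datatype letter = X | Y

type_synonym 'k ncpoly = "letter list \<Rightarrow> 'k"

definition nc_var :: "letter \<Rightarrow> 'k::field ncpoly" where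
  "nc_var a = (\<lambda>w. if w = [a] then 1 else 0)"

definition nc_mult :: "'k::field ncpoly \<Rightarrow> 'k ncpoly \<Rightarrow> 'k ncpoly" where
  "nc_mult p q = (\<lambda>w. \<Sum>i\<le>length w. p (take i w) * q (drop i w))"

definition nc_smult :: "'k::field \<Rightarrow> 'k ncpoly \<Rightarrow> 'k ncpoly" where
  "nc_smult c p = (\<lambda>w. c * p w)"

definition lie_bracket :: "'k::field ncpoly \<Rightarrow> 'k ncpoly \<Rightarrow> 'k ncpoly" where
  "lie_bracket p q = nc_mult p q - nc_mult q p"

inductive_set lie_gen :: "'k::field ncpoly set \<Rightarrow> 'k ncpoly set" for S where
  base: "p \<in> S \<Longrightarrow> p \<in> lie_gen S"
| zero: "0 \<in> lie_gen S"
| add: "p \<in> lie_gen S \<Longrightarrow> q \<in> lie_gen S \<Longrightarrow> p + q \<in> lie_gen S"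
| smult: "p \<in> lie_gen S \<Longrightarrow> nc_smult c p \<in> lie_gen S"
| bracket: "p \<in> lie_gen S \<Longrightarrow> q \<in> lie_gen S \<Longrightarrow> lie_bracket p q \<in> lie_gen S"

definition free_lie :: "'k::field ncpoly set" where
  "free_lie = lie_gen {nc_var X, nc_var Y}"

text \<open>The derivation delta with delta(x)=0, delta(y)=x, extended linearly (and as a derivation)
  to words: it replaces one occurrence of y by x in all possible ways. Its restriction to
  L(x,y) is the Lie derivation of the paper.\<close>
definition delta :: "'k::field ncpoly \<Rightarrow> 'k ncpoly" where
  "delta p = (\<lambda>w. \<Sum>i\<in>{i. i < length w \<and> w ! i = X}. p (w[i := Y]))"

definition nc_degree_le :: "'k::field ncpoly \<Rightarrow> nat \<Rightarrow> bool" where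
  "nc_degree_le p n \<longleftrightarrow> (\<forall>w. n < length w \<longrightarrow> p w = 0)"

end

theory Submission
  imports Defs "HOL.Modules"
begin

text \<open>
  The truncation to degree \<open>\<le> 5\<close> of an element of L(x,y) is a linear combination of 14
  right-normed brackets \<open>[a\<^sub>1,[a\<^sub>2,\<dots>,a\<^sub>n]]\<close>.  Indeed, a subspace that contains the
  generators and is stable under their adjoint actions contains the Lie subalgebra they
  generate (Jacobi identity), and the span of these brackets is stable under \<open>ad x\<close> and
  \<open>ad y\<close> modulo degree \<open>> 5\<close>: this only needs antisymmetry in degree 2 and the instance
  \<open>[x,[y,[y,x]]] = [y,[x,[y,x]]]\<close> of the Jacobi identity.  For such a combination \<open>f\<close> with
  \<open>\<delta> f = 0\<close>, evaluating \<open>\<delta> f\<close> at eight explicit words (using characteristic 0) leaves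
  only \<open>f\<close> in the span of \<open>x, [y,x], [x,[y,x]], [x,[x,[y,x]]], [x,[x,[x,[y,x]]]]\<close> and
  \<open>[[y,x],[x,[y,x]]]\<close>, all of which lie in the subalgebra generated by \<open>x\<close> and \<open>[y,x]\<close>.
\<close>

interpretation nc: module "nc_smult :: 'k::field \<Rightarrow> 'k ncpoly \<Rightarrow> 'k ncpoly"
  by unfold_locales (auto simp: nc_smult_def algebra_simps)

lemma (in module) span_image_finite:
  assumes "finite A"
  shows "span (g ` A) = range (\<lambda>u. \<Sum>a\<in>A. u a *s g a)"
proof
  show "range (\<lambda>u. \<Sum>a\<in>A. u a *s g a) \<subseteq> span (g ` A)"
    by (auto intro!: span_sum span_scale span_base[OF imageI])
next
  show "span (g ` A) \<subseteq> range (\<lambda>u. \<Sum>a\<in>A. u a *s g a)"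
  proof
    fix p assume "p \<in> span (g ` A)"
    then show "p \<in> range (\<lambda>u. \<Sum>a\<in>A. u a *s g a)"
    proof (induction rule: span_induct_alt)
      case base
      show ?case by (rule range_eqI[where x = "\<lambda>_. 0"]) simp
    next
      case (step c x y)
      then obtain b u where x: "b \<in> A" "x = g b" and y: "y = (\<Sum>a\<in>A. u a *s g a)" by blast
      have "(\<Sum>a\<in>A. (if a = b then c else 0) *s g a) = (\<Sum>a\<in>A. if a = b then c *s g b else 0)"
        by (rule sum.cong) auto
      then have sum_eq: "c *s x + y = (\<Sum>a\<in>A. (u a + (if a = b then c else 0)) *s g a)"
        using assms x by (simp add: y scale_left_distrib sum.distrib)
      show ?case unfolding sum_eq by (rule rangeI)
    qed
  qed
qed

section \<open>Multiplication of noncommutative polynomials\<close>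

lemma nc_var_apply: "nc_var a w = (if w = [a] then 1 else 0)"
  by (simp add: nc_var_def)

lemma nc_smult_apply [simp]: "nc_smult c p w = c * p w"
  by (simp add: nc_smult_def)

lemma nc_mult_Nil [simp]: "nc_mult p q [] = p [] * q []"
  by (simp add: nc_mult_def)

lemma nc_mult_Cons:
  "nc_mult p q (a # w) = p [] * q (a # w) + nc_mult (\<lambda>u. p (a # u)) q w"
proof -
  have "nc_mult p q (a # w) = (\<Sum>i\<le>Suc (length w). p (take i (a # w)) * q (drop i (a # w)))"
    by (simp add: nc_mult_def)
  also have "\<dots> = p [] * q (a # w) + (\<Sum>i\<le>length w. p (a # take i w) * q (drop i w))"
    by (subst sum.atMost_Suc_shift) simp
  finally show ?thesis
    by (simp add: nc_mult_def)
qed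

lemma nc_mult_add_left: "nc_mult (p + q) r = nc_mult p r + nc_mult q r"
  by (rule ext) (simp add: nc_mult_def distrib_right sum.distrib)

lemma nc_mult_add_right: "nc_mult p (q + r) = nc_mult p q + nc_mult p r"
  by (rule ext) (simp add: nc_mult_def distrib_left sum.distrib)

lemma nc_mult_diff_left: "nc_mult (p - q) r = nc_mult p r - nc_mult q r"
  by (rule ext) (simp add: nc_mult_def left_diff_distrib sum_subtractf)

lemma nc_mult_diff_right: "nc_mult p (q - r) = nc_mult p q - nc_mult p r"
  by (rule ext) (simp add: nc_mult_def right_diff_distrib sum_subtractf)

lemma nc_mult_smult_left: "nc_mult (nc_smult c p) q = nc_smult c (nc_mult p q)"
  by (rule ext) (simp add: nc_mult_def nc_smult_def sum_distrib_left mult.assoc)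

lemma nc_mult_smult_right: "nc_mult p (nc_smult c q) = nc_smult c (nc_mult p q)"
  by (rule ext) (simp add: nc_mult_def nc_smult_def sum_distrib_left mult.left_commute)

lemma nc_mult_zero_left [simp]: "nc_mult 0 p = 0"
  by (rule ext) (simp add: nc_mult_def)

lemma nc_mult_zero_right [simp]: "nc_mult p 0 = 0"
  by (rule ext) (simp add: nc_mult_def)

lemma nc_mult_assoc: "nc_mult (nc_mult p q) r = nc_mult p (nc_mult q r)"
proof
  fix w show "nc_mult (nc_mult p q) r w = nc_mult p (nc_mult q r) w"
  proof (induction w arbitrary: p)
    case Nil
    show ?case by simp
  next
    case (Cons a w)
    have "(\<lambda>u. nc_mult p q (a # u)) = nc_smult (p []) (\<lambda>u. q (a # u)) + nc_mult (\<lambda>u. p (a # u)) q"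
      by (rule ext) (simp add: nc_mult_Cons)
    then have "nc_mult (\<lambda>u. nc_mult p q (a # u)) r w
        = p [] * nc_mult (\<lambda>u. q (a # u)) r w + nc_mult (\<lambda>u. p (a # u)) (nc_mult q r) w"
      using Cons.IH by (simp add: nc_mult_add_left nc_mult_smult_left)
    then show ?case
      by (simp add: nc_mult_Cons algebra_simps)
  qed
qed

lemma nc_mult_var_left:
  "nc_mult (nc_var a) p w = (case w of [] \<Rightarrow> 0 | b # u \<Rightarrow> if b = a then p u else 0)"
proof (cases w)
  case (Cons b u)
  have "(\<lambda>v. nc_var a (b # v)) = (if b = a then (\<lambda>v. if v = [] then 1 else 0) else 0)"
    by (auto simp: nc_var_def)
  moreover have "nc_mult (\<lambda>v. if v = [] then 1 else 0) p u = p u"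
    by (cases u) (simp_all add: nc_mult_Cons nc_mult_zero_left[unfolded zero_fun_def])
  ultimately show ?thesis
    using Cons by (cases "b = a") (simp_all add: nc_mult_Cons nc_var_def flip: zero_fun_def)
qed (simp add: nc_var_def)

lemma nc_mult_var_right:
  "nc_mult p (nc_var a) w = (if w \<noteq> [] \<and> last w = a then p (butlast w) else 0)"
proof (induction w arbitrary: p)
  case Nil
  show ?case by (simp add: nc_var_def)
next
  case (Cons b w)
  have "nc_mult p (nc_var a) (b # w)
      = p [] * nc_var a (b # w) + (if w \<noteq> [] \<and> last w = a then p (b # butlast w) else 0)"
    by (simp only: nc_mult_Cons Cons.IH)
  then show ?case
    by (cases w) (simp_all add: nc_var_def)
qed

lemma lie_bracket_add_left: "lie_bracket (p + q) r = lie_bracket p r + lie_bracket q r"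
  by (simp add: lie_bracket_def nc_mult_add_left nc_mult_add_right)

lemma lie_bracket_add_right: "lie_bracket p (q + r) = lie_bracket p q + lie_bracket p r"
  by (simp add: lie_bracket_def nc_mult_add_left nc_mult_add_right)

lemma lie_bracket_smult_left: "lie_bracket (nc_smult c p) q = nc_smult c (lie_bracket p q)"
  by (simp add: lie_bracket_def nc_mult_smult_left nc_mult_smult_right nc.scale_right_diff_distrib)

lemma lie_bracket_smult_right: "lie_bracket p (nc_smult c q) = nc_smult c (lie_bracket p q)"
  by (simp add: lie_bracket_def nc_mult_smult_left nc_mult_smult_right nc.scale_right_diff_distrib)

lemma lie_bracket_zero_left [simp]: "lie_bracket 0 p = 0"
  by (simp add: lie_bracket_def)

lemma lie_bracket_self [simp]: "lie_bracket p p = 0"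
  by (simp add: lie_bracket_def)

lemma lie_bracket_antisym: "lie_bracket q p = - lie_bracket p q"
  by (simp add: lie_bracket_def)

lemma lie_bracket_jacobi:
  "lie_bracket (lie_bracket p q) r = lie_bracket p (lie_bracket q r) - lie_bracket q (lie_bracket p r)"
  by (simp add: lie_bracket_def nc_mult_diff_left nc_mult_diff_right nc_mult_assoc)

section \<open>Lie subalgebras generated by a set\<close>

lemma subspace_lie_gen: "nc.subspace (lie_gen S)"
  by (auto simp: nc.subspace_def intro: lie_gen.intros)

lemma lie_gen_subset_ad_closed:
  assumes W: "nc.subspace W" and "S \<subseteq> W"
    and ad_closed: "\<And>s v. s \<in> S \<Longrightarrow> v \<in> W \<Longrightarrow> lie_bracket s v \<in> W"
  shows "lie_gen S \<subseteq> W"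
proof -
  have ad_lie_gen: "lie_bracket p v \<in> W" if "p \<in> lie_gen S" "v \<in> W" for p v
    using that
  proof (induction arbitrary: v rule: lie_gen.induct)
    case (bracket p q)
    then show ?case
      unfolding lie_bracket_jacobi by (intro nc.subspace_diff[OF W] bracket.IH)
  qed (use W ad_closed in \<open>auto simp: lie_bracket_add_left lie_bracket_smult_left
        nc.subspace_0 nc.subspace_add nc.subspace_scale\<close>)
  show ?thesis
  proof
    fix p assume "p \<in> lie_gen S"
    then show "p \<in> W"
      by (induction rule: lie_gen.induct)
        (use W \<open>S \<subseteq> W\<close> in \<open>blast intro: ad_lie_gen
          nc.subspace_0 nc.subspace_add nc.subspace_scale\<close>)+
  qed
qed

section \<open>Right-normed brackets of degree at most 5\<close>

definition nc_trunc :: "nat \<Rightarrow> 'k::field ncpoly \<Rightarrow> 'k ncpoly" where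
  "nc_trunc n p = (\<lambda>w. if length w \<le> n then p w else 0)"

lemma module_hom_nc_trunc: "module_hom nc_smult nc_smult (nc_trunc n)"
  by unfold_locales (auto simp: nc_trunc_def)

lemma nc_trunc_eq_self: "nc_degree_le p n \<Longrightarrow> nc_trunc n p = p"
  by (rule ext) (simp add: nc_trunc_def nc_degree_le_def)

lemma nc_trunc_lie_bracket_right:
  "nc_trunc n (lie_bracket p q) = nc_trunc n (lie_bracket p (nc_trunc n q))"
proof
  fix w
  have "nc_mult p q w = nc_mult p (nc_trunc n q) w" "nc_mult q p w = nc_mult (nc_trunc n q) p w"
    if "length w \<le> n"
    using that by (auto simp: nc_mult_def nc_trunc_def intro!: sum.cong)
  then show "nc_trunc n (lie_bracket p q) w = nc_trunc n (lie_bracket p (nc_trunc n q)) w"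
    by (simp add: nc_trunc_def lie_bracket_def)
qed

fun lie_word :: "letter list \<Rightarrow> 'k::field ncpoly" where
  "lie_word [] = 0"
| "lie_word [a] = nc_var a"
| "lie_word (a # b # w) = lie_bracket (nc_var a) (lie_word (b # w))"

lemma lie_word_Cons: "w \<noteq> [] \<Longrightarrow> lie_word (a # w) = lie_bracket (nc_var a) (lie_word w)"
  by (cases w) simp_all

lemma lie_word_eq_0: "length u \<noteq> length w \<Longrightarrow> lie_word w u = 0"
proof (induction w arbitrary: u rule: lie_word.induct)
  case (3 a b w)
  then show ?case
    by (cases u) (auto simp: lie_bracket_def nc_mult_var_left nc_mult_var_right)
qed (auto simp: nc_var_def)

lemma nc_trunc_lie_word: "length w \<le> n \<Longrightarrow> nc_trunc n (lie_word w) = lie_word w"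
  by (rule ext) (simp add: nc_trunc_def lie_word_eq_0)

lemma nc_trunc_lie_word_long: "n < length w \<Longrightarrow> nc_trunc n (lie_word w) = 0"
  by (rule ext) (simp add: nc_trunc_def lie_word_eq_0)

text \<open>These words index a basis of L(x,y) in degrees \<open>\<le> 5\<close>, but only the spanning
  property is used.\<close>

definition spanning_words :: "letter list set" where
  "spanning_words = {[X], [Y], [Y,X], [X,Y,X], [Y,Y,X], [X,X,Y,X], [Y,X,Y,X], [Y,Y,Y,X],
     [X,X,X,Y,X], [Y,X,X,Y,X], [X,Y,X,Y,X], [Y,Y,X,Y,X], [X,Y,Y,Y,X], [Y,Y,Y,Y,X]}"

lemma lie_word_Cons_in_span:
  assumes "w \<in> spanning_words" "length w < 5"
  shows "lie_word (a # w) \<in> nc.span (lie_word ` spanning_words :: 'k::field ncpoly set)"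
proof -
  have "lie_word [X, X] = (0 :: 'k ncpoly)" "lie_word [Y, Y] = (0 :: 'k ncpoly)"
    by simp_all
  moreover have "lie_word [X, Y] = - (lie_word [Y, X] :: 'k ncpoly)"
    by (simp add: lie_bracket_antisym[of "nc_var X"])
  moreover have "lie_word [X, Y, Y, X] = (lie_word [Y, X, Y, X] :: 'k ncpoly)"
    using lie_bracket_jacobi[of "nc_var Y" "nc_var X" "lie_word [Y, X]"]
    by (simp add: right_minus_eq) (rule sym)
  moreover have "w \<in> {[X], [Y], [Y,X], [X,Y,X], [Y,Y,X], [X,X,Y,X], [Y,X,Y,X], [Y,Y,Y,X]}"
    using assms unfolding spanning_words_def by (elim insertE emptyE) simp_all
  then have "a # w \<in> spanning_words \<or> a # w \<in> {[X, X], [Y, Y], [X, Y], [X, Y, Y, X]}"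
    unfolding spanning_words_def by (cases a) (elim insertE emptyE; simp)+
  moreover have "[Y, X] \<in> spanning_words" "[Y, X, Y, X] \<in> spanning_words"
    by (simp_all add: spanning_words_def)
  ultimately show ?thesis
    by (auto simp del: lie_word.simps
        intro: nc.span_base[OF imageI] nc.span_neg[OF nc.span_base[OF imageI]] nc.span_zero)
qed

lemma module_hom_lie_bracket: "module_hom nc_smult nc_smult (lie_bracket p)"
  by unfold_locales (simp_all add: lie_bracket_add_right lie_bracket_smult_right)

lemma nc_trunc_lie_bracket_var_in_span:
  fixes q :: "'k::field ncpoly"
  assumes "q \<in> nc.span (lie_word ` spanning_words)"
  shows "nc_trunc 5 (lie_bracket (nc_var a) q) \<in> nc.span (lie_word ` spanning_words)"
proof -
  let ?S = "nc.span (lie_word ` spanning_words) :: 'k ncpoly set"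
  have "q \<in> lie_bracket (nc_var a) -` (nc_trunc 5 -` ?S)"
  proof (rule nc.span_subspace_induct[OF assms])
    show "nc.subspace (lie_bracket (nc_var a) -` (nc_trunc 5 -` ?S))"
      by (intro module_hom.subspace_vimage[OF module_hom_lie_bracket]
          module_hom.subspace_vimage[OF module_hom_nc_trunc] nc.subspace_span)
  next
    fix r :: "'k ncpoly" assume "r \<in> lie_word ` spanning_words"
    then obtain w where w: "w \<in> spanning_words" and r: "r = lie_word w"
      by blast
    moreover have "[] \<notin> spanning_words"
      by (simp add: spanning_words_def)
    ultimately have "lie_bracket (nc_var a) r = lie_word (a # w)"
      by (metis lie_word_Cons)
    moreover have "nc_trunc 5 (lie_word (a # w)) \<in> ?S"
    proof (cases "length w < 5")
      case True
      then show ?thesis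
        using lie_word_Cons_in_span[OF w True] by (simp add: nc_trunc_lie_word)
    next
      case False
      then show ?thesis
        by (simp add: nc_trunc_lie_word_long nc.span_zero)
    qed
    ultimately show "r \<in> lie_bracket (nc_var a) -` (nc_trunc 5 -` ?S)"
      by simp
  qed
  then show ?thesis
    by simp
qed

lemma nc_trunc_free_lie_in_span:
  fixes p :: "'k::field ncpoly"
  assumes "p \<in> free_lie"
  shows "nc_trunc 5 p \<in> nc.span (lie_word ` spanning_words)"
proof -
  let ?S = "nc.span (lie_word ` spanning_words) :: 'k ncpoly set"
  have "free_lie \<subseteq> nc_trunc 5 -` ?S"
    unfolding free_lie_def
  proof (rule lie_gen_subset_ad_closed)
    show "nc.subspace (nc_trunc 5 -` ?S)"
      by (intro module_hom.subspace_vimage[OF module_hom_nc_trunc] nc.subspace_span)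
    have "[a] \<in> spanning_words" for a
      by (cases a) (simp_all add: spanning_words_def)
    then have "nc_trunc 5 (lie_word [a]) \<in> ?S" for a
      by (simp add: nc_trunc_lie_word nc.span_base del: lie_word.simps)
    then show "{nc_var X, nc_var Y} \<subseteq> nc_trunc 5 -` ?S"
      by simp
    fix s v :: "'k ncpoly" assume "s \<in> {nc_var X, nc_var Y}" and v: "v \<in> nc_trunc 5 -` ?S"
    then obtain a where "s = nc_var a"
      by blast
    then have "nc_trunc 5 (lie_bracket s v) = nc_trunc 5 (lie_bracket (nc_var a) (nc_trunc 5 v))"
      using nc_trunc_lie_bracket_right by blast
    also have "\<dots> \<in> ?S"
      using v by (intro nc_trunc_lie_bracket_var_in_span) simp
    finally show "lie_bracket s v \<in> nc_trunc 5 -` ?S"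
      by simp
  qed
  then show ?thesis
    using assms by blast
qed

section \<open>The kernel of \<open>\<delta>\<close> in degrees at most 5\<close>

lemma delta_eq_sum: "delta p w = (\<Sum>i<length w. if w ! i = X then p (w[i := Y]) else 0)"
proof -
  have "{i. i < length w \<and> w ! i = X} = {i \<in> {..<length w}. w ! i = X}"
    by auto
  then show ?thesis
    by (simp only: delta_def sum.inter_filter[OF finite_lessThan])
qed

lemma delta_Nil [simp]: "delta p [] = 0"
  by (simp add: delta_eq_sum)

lemma delta_Cons: "delta p (a # w) = (if a = X then p (Y # w) else 0) + delta (\<lambda>u. p (a # u)) w"
  unfolding delta_eq_sum length_Cons sum.lessThan_Suc_shift nth_Cons_Suc list_update_code by simp

lemma sum_fun_apply: "sum g A x = (\<Sum>a\<in>A. g a x)"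
  by (induction A rule: infinite_finite_induct) simp_all

lemma delta_kernel_coefficients:
  fixes c :: "letter list \<Rightarrow> 'k::field_char_0"
  assumes "delta (\<Sum>w\<in>spanning_words. nc_smult (c w) (lie_word w)) = 0"
  shows "c [Y] = 0" "c [Y,Y,X] = 0" "c [Y,X,Y,X] = 0" "c [Y,Y,Y,X] = 0"
    "c [Y,Y,X,Y,X] = 0" "c [X,Y,Y,Y,X] = 0" "c [Y,Y,Y,Y,X] = 0"
    "c [X,Y,X,Y,X] = - c [Y,X,X,Y,X]"
proof -
  let ?f = "\<Sum>w\<in>spanning_words. nc_smult (c w) (lie_word w)"
  have f: "?f u = (\<Sum>w\<in>spanning_words. c w * lie_word w u)" for u
    by (simp add: sum_fun_apply)
  have eq: "delta ?f u = 0" for u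
    using assms by simp
  note eval = delta_Cons f spanning_words_def lie_bracket_def nc_mult_var_left nc_mult_var_right
    nc_var_apply
  \<comment> \<open>Each word below isolates one coefficient, up to a factor that is nonzero in
    characteristic 0.\<close>
  show "c [Y] = 0"
    using eq[of "[X]"] by (simp add: eval)
  show "c [Y,Y,X] = 0"
    using eq[of "[Y,X,X]"] by (simp add: eval)
  show "c [Y,X,Y,X] = 0"
    using eq[of "[Y,X,X,X]"] by (simp add: eval)
  show "c [Y,Y,Y,X] = 0"
    using eq[of "[Y,Y,X,X]"] by (simp add: eval)
  show "c [Y,Y,Y,Y,X] = 0"
    using eq[of "[Y,Y,Y,X,X]"] by (simp add: eval)
  show yyxyx: "c [Y,Y,X,Y,X] = 0"
    using eq[of "[Y,X,X,Y,X]"] by (simp add: eval)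
  show "c [X,Y,Y,Y,X] = 0"
    using eq[of "[X,X,Y,Y,X]"] yyxyx by (simp add: eval)
  show "c [X,Y,X,Y,X] = - c [Y,X,X,Y,X]"
    using eq[of "[Y,X,X,X,X]"] by (simp add: eval)
qed

lemma delta_kernel_in_lie_gen:
  fixes c :: "letter list \<Rightarrow> 'k::field_char_0"
  assumes "delta (\<Sum>w\<in>spanning_words. nc_smult (c w) (lie_word w)) = 0"
  shows "(\<Sum>w\<in>spanning_words. nc_smult (c w) (lie_word w))
    \<in> lie_gen {nc_var X, lie_bracket (nc_var Y) (nc_var X)}"
proof -
  let ?G = "lie_gen {nc_var X, lie_bracket (nc_var Y) (nc_var X)} :: 'k ncpoly set"
  have X_Cons: "lie_word (X # w) \<in> ?G" if "lie_word w \<in> ?G" "w \<noteq> []" for w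
    using that by (simp add: lie_word_Cons lie_gen.bracket lie_gen.base)
  have x: "lie_word [X] \<in> ?G" and yx: "lie_word [Y, X] \<in> ?G"
    by (simp_all add: lie_gen.base)
  have xyx: "lie_word [X, Y, X] \<in> ?G"
    using X_Cons[OF yx] by simp
  have xxyx: "lie_word [X, X, Y, X] \<in> ?G"
    using X_Cons[OF xyx] by simp
  have xxxyx: "lie_word [X, X, X, Y, X] \<in> ?G"
    using X_Cons[OF xxyx] by simp
  have "lie_word [Y, X, X, Y, X] - lie_word [X, Y, X, Y, X]
      = lie_bracket (lie_word [Y, X]) (lie_word [X, Y, X] :: 'k ncpoly)"
    by (simp only: lie_word.simps lie_bracket_jacobi)
  then have yxxyx: "lie_word [Y, X, X, Y, X] - lie_word [X, Y, X, Y, X] \<in> ?G"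
    using lie_gen.bracket[OF yx xyx] by simp
  have "(\<Sum>w\<in>spanning_words. nc_smult (c w) (lie_word w))
      = nc_smult (c [X]) (lie_word [X]) + nc_smult (c [Y, X]) (lie_word [Y, X])
        + nc_smult (c [X, Y, X]) (lie_word [X, Y, X])
        + nc_smult (c [X, X, Y, X]) (lie_word [X, X, Y, X])
        + nc_smult (c [X, X, X, Y, X]) (lie_word [X, X, X, Y, X])
        + nc_smult (c [Y, X, X, Y, X]) (lie_word [Y, X, X, Y, X] - lie_word [X, Y, X, Y, X])"
    using delta_kernel_coefficients[OF assms]
    by (simp add: spanning_words_def nc.scale_right_diff_distrib add_ac del: lie_word.simps)
  also have "\<dots> \<in> ?G"
    by (intro nc.subspace_add[OF subspace_lie_gen] nc.subspace_scale[OF subspace_lie_gen]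
        x yx xyx xxyx xxxyx yxxyx)
  finally show ?thesis .
qed

theorem proposition5p3:
  fixes f :: "'k::field_char_0 ncpoly"
  assumes "f \<in> free_lie"
    and "delta f = 0"
    and "f \<noteq> 0"
    and "nc_degree_le f 5"
  shows "f \<in> lie_gen {nc_var X, lie_bracket (nc_var Y) (nc_var X)}"
proof -
  have "finite spanning_words"
    by (simp add: spanning_words_def)
  moreover have "f \<in> nc.span (lie_word ` spanning_words)"
    using nc_trunc_free_lie_in_span[OF assms(1)] by (simp add: nc_trunc_eq_self[OF assms(4)])
  ultimately obtain c where f: "f = (\<Sum>w\<in>spanning_words. nc_smult (c w) (lie_word w))"
    by (auto simp: nc.span_image_finite)
  show ?thesis
    using delta_kernel_in_lie_gen assms(2) unfolding f by blast
qed

end
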